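(* Let $s,s'\in H_A$ and $k>0$. Let $\bar s,\bar{s'}$ denote the forests obtained from $s$ and $s'$ by removing all nodes at depth $k$ or more. Then $s\sim_k s'$ if and only if $\bar s$ and $\bar{s'}$ are idempotent-and-commutative equivalent.
   Context: $H_A$ is the set of forests over the finite alphabet $A$ (finite ordered sequences of finite ordered $A$-labelled trees), with concatenation $+$; root nodes have depth $0$; $as$ is the tree with root $a$ and child forest $s$. Equivalences $\sim_k$: $\sim_0$ identifies all forests; for $s=a_1s_1+\cdots+a_rs_r$, $s\sim_{k+1}s'$ iff $\{(a_i,[s_i]_{\sim_k}):1\le i\le r\}$ equals the corresponding set for $s'$. Two forests are idempotent-and-commutative equivalent if one can be transformed into the other by finitely many operations: (i) $p(t_1+t_2)\to p(t_2+t_1)$ for a context $p$ and trees $t_1,t_2$; (ii) $pt\to p(t+t)$ for a tree $t$; (iii) $p(t+t)\to pt$ (a context is a forest with one leaf replaced by a hole, $pt$ the result of substituting $t$ into the hole). *)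

theory Defs
  imports Main
begin

text \<open>Finite ordered A-labelled trees; a forest is a list of trees,
  concatenation of forests is list append.\<close>
datatype 'a tree = Node 'a "'a tree list"

type_synonym 'a forest = "'a tree list"

text \<open>The equivalences sim_k. The class of a forest is represented by the set of
  forests equivalent to it.\<close>
primrec simk :: "nat \<Rightarrow> 'a forest \<Rightarrow> 'a forest \<Rightarrow> bool" where
  "simk 0 s s' = True"
| "simk (Suc k) s s' =
     ((\<lambda>t. case t of Node a c \<Rightarrow> (a, {u. simk k c u})) ` set s =
      (\<lambda>t. case t of Node a c \<Rightarrow> (a, {u. simk k c u})) ` set s')"

text \<open>Remove all nodes at depth k or more (roots have depth 0).\<close>
primrec trunc :: "nat \<Rightarrow> 'a forest \<Rightarrow> 'a forest" where
  "trunc 0 s = []"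
| "trunc (Suc k) s = map (\<lambda>t. case t of Node a c \<Rightarrow> Node a (trunc k c)) s"

text \<open>One step p(t1+t2) -> p(t2+t1), p t -> p(t+t), p(t+t) -> p t, where p ranges
  over contexts: the hole sits at an arbitrary position of an arbitrary sibling list.\<close>
inductive ic_step :: "'a forest \<Rightarrow> 'a forest \<Rightarrow> bool" where
  swap: "ic_step (xs @ [t1, t2] @ ys) (xs @ [t2, t1] @ ys)"
| dup: "ic_step (xs @ [t] @ ys) (xs @ [t, t] @ ys)"
| merge: "ic_step (xs @ [t, t] @ ys) (xs @ [t] @ ys)"
| deep: "ic_step c c' \<Longrightarrow> ic_step (xs @ [Node a c] @ ys) (xs @ [Node a c'] @ ys)"

definition ic_equiv :: "'a forest \<Rightarrow> 'a forest \<Rightarrow> bool" where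
  "ic_equiv s s' \<longleftrightarrow> ic_step\<^sup>*\<^sup>* s s'"

end

theory Submission
  imports Defs
begin

text \<open>A rewriting step permutes, duplicates or merges siblings somewhere in the forest,
  which does not change the set of pairs (label, class of children) through which \<open>simk\<close>
  compares forests; so equivalent forests are \<open>simk k\<close>-related for every \<open>k\<close>, and since
  \<open>simk k\<close> ignores nodes of depth \<open>k\<close> or more, every forest is \<open>simk k\<close>-related to its
  truncation. Conversely, by induction on \<open>k\<close>, if \<open>simk (Suc k) s s'\<close> then each tree of
  either truncation has an equivalent tree in the other; appending such trees by duplication
  and moving turns one truncation \<open>t\<close> into \<open>t @ t'\<close>, i.e. up to commutativity into
  \<open>t' @ t\<close>, and back into the other truncation \<open>t'\<close>.\<close>

lemma simk_refl: "simk k s s"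
  by (cases k) auto

lemma simk_sym: "simk k s s' \<Longrightarrow> simk k s' s"
  by (cases k) auto

lemma simk_trans: "simk k s s' \<Longrightarrow> simk k s' s'' \<Longrightarrow> simk k s s''"
  by (cases k) auto

lemma simk_class_eq: "simk k s s' \<Longrightarrow> {u. simk k s u} = {u. simk k s' u}"
  using simk_sym simk_trans by blast

lemma simk_Suc_Node:
  assumes "simk (Suc k) s s'" and "Node a c \<in> set s"
  obtains c' where "Node a c' \<in> set s'" and "simk k c c'"
proof -
  let ?f = "\<lambda>t. case t of Node a c \<Rightarrow> (a, {u. simk k c u})"
  have "?f (Node a c) \<in> ?f ` set s'"
    using assms by force
  then obtain c' where "Node a c' \<in> set s'" and "{u. simk k c' u} = {u. simk k c u}"
    by (auto split: tree.splits)
  with simk_refl[of k c'] show thesis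
    using that by blast
qed

lemma simk_trunc: "simk k (trunc k s) s"
proof (induction k arbitrary: s)
  case 0
  show ?case by simp
next
  case (Suc k)
  let ?f = "\<lambda>t. case t of Node a c \<Rightarrow> (a, {u. simk k c u})"
  have "?f (case t of Node a c \<Rightarrow> Node a (trunc k c)) = ?f t" for t :: "'a tree"
    using simk_class_eq[OF Suc.IH] by (cases t) auto
  then show ?case
    by (simp add: image_image)
qed

lemma simk_if_set_eq: "set s = set s' \<Longrightarrow> simk k s s'"
  by (cases k) auto

lemma ic_step_imp_simk: "ic_step s s' \<Longrightarrow> simk k s s'"
proof (induction arbitrary: k rule: ic_step.induct)
  case (deep c c' xs a ys)
  have "{u. simk j c u} = {u. simk j c' u}" for j
    using simk_class_eq[OF deep.IH] .
  then show ?case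
    by (cases k) auto
qed (rule simk_if_set_eq, auto)+

lemma ic_equiv_imp_simk: "ic_equiv s s' \<Longrightarrow> simk k s s'"
  unfolding ic_equiv_def
  by (induction rule: rtranclp_induct) (auto intro: simk_refl simk_trans ic_step_imp_simk)

lemma ic_step_sym: "ic_step s s' \<Longrightarrow> ic_step s' s"
proof (induction rule: ic_step.induct)
  case (swap xs t1 t2 ys)
  show ?case using ic_step.swap[of xs t2 t1 ys] by simp
next
  case (dup xs t ys)
  show ?case using ic_step.merge[of xs t ys] by simp
next
  case (merge xs t ys)
  show ?case using ic_step.dup[of xs t ys] by simp
next
  case (deep c c' xs a ys)
  show ?case using ic_step.deep[OF deep.IH] .
qed

lemma ic_equiv_refl: "ic_equiv s s"
  unfolding ic_equiv_def by simp

lemma ic_equiv_trans [trans]: "ic_equiv s s' \<Longrightarrow> ic_equiv s' s'' \<Longrightarrow> ic_equiv s s''"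
  unfolding ic_equiv_def by simp

lemma ic_equiv_sym: "ic_equiv s s' \<Longrightarrow> ic_equiv s' s"
  unfolding ic_equiv_def
  by (induction rule: rtranclp_induct) (auto intro: ic_step_sym converse_rtranclp_into_rtranclp)

lemma ic_step_imp_ic_equiv: "ic_step s s' \<Longrightarrow> ic_equiv s s'"
  unfolding ic_equiv_def by simp

lemma ic_step_append: "ic_step s s' \<Longrightarrow> ic_step (xs @ s @ ys) (xs @ s' @ ys)"
proof (induction rule: ic_step.induct)
  case (swap xs0 t1 t2 ys0)
  show ?case using ic_step.swap[of "xs @ xs0" t1 t2 "ys0 @ ys"] by simp
next
  case (dup xs0 t ys0)
  show ?case using ic_step.dup[of "xs @ xs0" t "ys0 @ ys"] by simp
next
  case (merge xs0 t ys0)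
  show ?case using ic_step.merge[of "xs @ xs0" t "ys0 @ ys"] by simp
next
  case (deep c c' xs0 a ys0)
  show ?case using ic_step.deep[OF deep.hyps, of "xs @ xs0" a "ys0 @ ys"] by simp
qed

lemma ic_equiv_append: "ic_equiv s s' \<Longrightarrow> ic_equiv (xs @ s @ ys) (xs @ s' @ ys)"
  unfolding ic_equiv_def
  by (induction rule: rtranclp_induct) (auto intro: ic_step_append rtranclp.rtrancl_into_rtrancl)

lemma ic_equiv_Node: "ic_equiv c c' \<Longrightarrow> ic_equiv [Node a c] [Node a c']"
  unfolding ic_equiv_def
proof (induction rule: rtranclp_induct)
  case (step c' c'')
  then show ?case
    using ic_step.deep[of c' c'' "[]" a "[]"] by (auto intro: rtranclp.rtrancl_into_rtrancl)
qed simp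

lemma ic_equiv_Cons_snoc: "ic_equiv (x # ys) (ys @ [x])"
proof (induction ys)
  case Nil
  show ?case by (simp add: ic_equiv_refl)
next
  case (Cons y ys)
  have "ic_equiv (x # y # ys) (y # x # ys)"
    using ic_step_imp_ic_equiv[OF ic_step.swap[of "[]" x y ys]] by simp
  also have "ic_equiv \<dots> (y # ys @ [x])"
    using ic_equiv_append[OF Cons.IH, of "[y]" "[]"] by simp
  finally show ?case by simp
qed

lemma ic_equiv_append_commute: "ic_equiv (xs @ ys) (ys @ xs)"
proof (induction xs)
  case Nil
  show ?case by (simp add: ic_equiv_refl)
next
  case (Cons x xs)
  have "ic_equiv (x # xs @ ys) (x # ys @ xs)"
    using ic_equiv_append[OF Cons.IH, of "[x]" "[]"] by simp
  also have "ic_equiv \<dots> (ys @ xs @ [x])"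
    using ic_equiv_Cons_snoc[of x "ys @ xs"] by simp
  also have "ic_equiv \<dots> (ys @ x # xs)"
    using ic_equiv_append[OF ic_equiv_sym[OF ic_equiv_Cons_snoc[of x xs]], of ys "[]"] by simp
  finally show ?case by simp
qed

text \<open>A tree equivalent to one already present can be appended: duplicate the present
  one, move the copy to the end and rewrite it there.\<close>
lemma ic_equiv_snoc:
  assumes "x \<in> set s" and "ic_equiv [x] [y]"
  shows "ic_equiv s (s @ [y])"
proof -
  obtain xs ys where s: "s = xs @ x # ys"
    using split_list[OF assms(1)] by blast
  have "ic_equiv s (xs @ x # x # ys)"
    using ic_step_imp_ic_equiv[OF ic_step.dup[of xs x ys]] s by simp
  also have "ic_equiv \<dots> (xs @ x # ys @ [x])"
    using ic_equiv_append[OF ic_equiv_Cons_snoc[of x ys], of "xs @ [x]" "[]"] by simp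
  also have "ic_equiv \<dots> (s @ [y])"
    using ic_equiv_append[OF assms(2), of "xs @ x # ys" "[]"] s by simp
  finally show ?thesis .
qed

lemma ic_equiv_append_covered:
  assumes "\<forall>y \<in> set s'. \<exists>x \<in> set s. ic_equiv [x] [y]"
  shows "ic_equiv s (s @ s')"
  using assms
proof (induction s' arbitrary: s)
  case Nil
  show ?case by (simp add: ic_equiv_refl)
next
  case (Cons y s')
  then obtain x where "x \<in> set s" "ic_equiv [x] [y]"
    by (meson list.set_intros(1))
  then have "ic_equiv s (s @ [y])"
    by (rule ic_equiv_snoc)
  also have "ic_equiv \<dots> ((s @ [y]) @ s')"
    using Cons.prems by (intro Cons.IH) simp
  finally show ?case
    by (metis append.assoc append_Cons append_Nil)
qed

lemma ic_equiv_if_covered: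
  assumes "\<forall>x \<in> set s. \<exists>y \<in> set s'. ic_equiv [x] [y]"
    and "\<forall>y \<in> set s'. \<exists>x \<in> set s. ic_equiv [x] [y]"
  shows "ic_equiv s s'"
proof -
  have "ic_equiv s (s @ s')"
    using assms(2) by (rule ic_equiv_append_covered)
  also have "ic_equiv \<dots> (s' @ s)"
    by (rule ic_equiv_append_commute)
  also have "ic_equiv \<dots> s'"
  proof (rule ic_equiv_sym, rule ic_equiv_append_covered)
    show "\<forall>x \<in> set s. \<exists>y \<in> set s'. ic_equiv [y] [x]"
      using assms(1) ic_equiv_sym by blast
  qed
  finally show ?thesis .
qed

lemma trunc_Suc_covered:
  fixes s s' :: "'a forest"
  assumes "simk (Suc k) s s'"
    and IH: "\<And>c c' :: 'a forest. simk k c c' \<Longrightarrow> ic_equiv (trunc k c) (trunc k c')"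
  shows "\<forall>x \<in> set (trunc (Suc k) s). \<exists>y \<in> set (trunc (Suc k) s'). ic_equiv [x] [y]"
proof
  fix x
  assume "x \<in> set (trunc (Suc k) s)"
  then obtain a c where "Node a c \<in> set s" and x: "x = Node a (trunc k c)"
    by (auto split: tree.splits)
  obtain c' where c': "Node a c' \<in> set s'" and "simk k c c'"
    using assms(1) \<open>Node a c \<in> set s\<close> by (rule simk_Suc_Node)
  have "ic_equiv [x] [Node a (trunc k c')]"
    unfolding x by (rule ic_equiv_Node[OF IH[OF \<open>simk k c c'\<close>]])
  moreover have "Node a (trunc k c') \<in> set (trunc (Suc k) s')"
    using c' by force
  ultimately show "\<exists>y \<in> set (trunc (Suc k) s'). ic_equiv [x] [y]"
    by blast
qed

lemma simk_imp_ic_equiv_trunc: "simk k s s' \<Longrightarrow> ic_equiv (trunc k s) (trunc k s')"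
proof (induction k arbitrary: s s')
  case 0
  show ?case by (simp add: ic_equiv_refl)
next
  case (Suc k)
  show ?case
  proof (rule ic_equiv_if_covered)
    show "\<forall>x \<in> set (trunc (Suc k) s). \<exists>y \<in> set (trunc (Suc k) s'). ic_equiv [x] [y]"
      using Suc.prems by (rule trunc_Suc_covered) (rule Suc.IH)
    show "\<forall>y \<in> set (trunc (Suc k) s'). \<exists>x \<in> set (trunc (Suc k) s). ic_equiv [x] [y]"
      using trunc_Suc_covered[OF simk_sym[OF Suc.prems] Suc.IH] ic_equiv_sym by blast
  qed
qed

theorem lemma5:
  fixes s s' :: "('a::finite) forest" and k :: nat
  assumes "k > 0"
  shows "simk k s s' \<longleftrightarrow> ic_equiv (trunc k s) (trunc k s')"
proof
  assume "simk k s s'"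
  then show "ic_equiv (trunc k s) (trunc k s')"
    by (rule simk_imp_ic_equiv_trunc)
next
  assume "ic_equiv (trunc k s) (trunc k s')"
  then have "simk k (trunc k s) (trunc k s')"
    by (rule ic_equiv_imp_simk)
  then show "simk k s s'"
    using simk_trunc[of k s] simk_trunc[of k s'] simk_sym simk_trans by blast
qed

end
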